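(* Let $L>0$ and let $P\in H^2(0,L)$ be real-valued with $P(x)\ge P^0>0$ for all $x\in[0,L]$, for some constant $P^0$. Let $$\mathcal H=\{z=(w,v,\xi,\psi): w\in H^2(0,L),\ v\in H^1(0,L),\ \xi=v(L),\ \psi=v(0)\},$$ a closed subspace of $H^2(0,L)\times H^1(0,L)\times\mathbb C\times\mathbb C$ (complex-valued functions), with natural inner product $\langle z_1,z_2\rangle=\langle w_1,w_2\rangle_{H^2}+\langle v_1,v_2\rangle_{H^1}+\xi_1\bar\xi_2+\psi_1\bar\psi_2$ and norm $\|\cdot\|$. For positive constants $\alpha_1,\alpha_2,\gamma$ define $$\begin{aligned}\langle z_1,z_2\rangle_{\mathcal H}:={}&\alpha_1\int_0^L\big[\gamma (Pw_1')'(P\bar w_2')'+Pw_1'\bar w_2'\big]\,dx+\alpha_1\gamma P(L)w_1'(L)\bar w_2'(L)+\alpha_2 w_1(0)\bar w_2(0)\\&+\alpha_1\int_0^L\big(\gamma P v_1'\bar v_2'+v_1\bar v_2\big)\,dx+\alpha_1P(L)\xi_1\bar\xi_2+\alpha_2\gamma\psi_1\bar\psi_2\\&+\tfrac12\big(\psi_1-2\alpha_1P(0)w_1'(0)+2\alpha_2w_1(0)\big)\big(\bar\psi_2-2\alpha_1P(0)\bar w_2'(0)+2\alpha_2\bar w_2(0)\big),\end{aligned}$$ and $\|z\|_{\mathcal H}=\langle z,z\rangle_{\mathcal H}^{1/2}$. Then $\|\cdot\|_{\mathcal H}$ is equivalent to $\|\cdot\|$ on $\mathcal H$, i.e. there are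 constants $c_1,c_2>0$ with $c_1\|z\|\le\|z\|_{\mathcal H}\le c_2\|z\|$ for all $z\in\mathcal H$.
   Context: Prime denotes the derivative in $x$; $H^n(0,L)$ are the standard Sobolev spaces; a bar denotes complex conjugation. *)

theory Defs
  imports "HOL-Analysis.Analysis"
begin

text \<open>Sobolev spaces on (0,L) for complex-valued functions, via the (absolutely continuous)
  representative: f is in H^1 iff f(x) = f(0) + int_0^x g for some g in L^2(0,L).
  Only the values on [0,L] matter.\<close>

definition has_wderiv :: "real \<Rightarrow> (real \<Rightarrow> complex) \<Rightarrow> (real \<Rightarrow> complex) \<Rightarrow> bool" where
  "has_wderiv L f g \<longleftrightarrow>
     g absolutely_integrable_on {0..L} \<and>
     (\<lambda>x. (cmod (g x))\<^sup>2) integrable_on {0..L} \<and>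
     (\<forall>x\<in>{0..L}. f x = f 0 + integral {0..x} g)"

definition H1 :: "real \<Rightarrow> (real \<Rightarrow> complex) \<Rightarrow> bool" where
  "H1 L f \<longleftrightarrow> (\<lambda>x. (cmod (f x))\<^sup>2) integrable_on {0..L} \<and> (\<exists>g. has_wderiv L f g)"

definition H2 :: "real \<Rightarrow> (real \<Rightarrow> complex) \<Rightarrow> bool" where
  "H2 L f \<longleftrightarrow> (\<lambda>x. (cmod (f x))\<^sup>2) integrable_on {0..L} \<and> (\<exists>g. has_wderiv L f g \<and> H1 L g)"

definition wd1 :: "real \<Rightarrow> (real \<Rightarrow> complex) \<Rightarrow> real \<Rightarrow> complex" where
  "wd1 L f = (SOME g. has_wderiv L f g)"

text \<open>Derivative of an H^2 function, chosen as its H^1 (continuous) representative,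
  so that point values such as w'(0), w'(L) are meaningful.\<close>
definition wd2 :: "real \<Rightarrow> (real \<Rightarrow> complex) \<Rightarrow> real \<Rightarrow> complex" where
  "wd2 L f = (SOME g. has_wderiv L f g \<and> H1 L g)"

definition H1norm2 :: "real \<Rightarrow> (real \<Rightarrow> complex) \<Rightarrow> real" where
  "H1norm2 L v = integral {0..L} (\<lambda>x. (cmod (v x))\<^sup>2 + (cmod (wd1 L v x))\<^sup>2)"

definition H2norm2 :: "real \<Rightarrow> (real \<Rightarrow> complex) \<Rightarrow> real" where
  "H2norm2 L w = integral {0..L}
     (\<lambda>x. (cmod (w x))\<^sup>2 + (cmod (wd2 L w x))\<^sup>2 + (cmod (wd1 L (wd2 L w) x))\<^sup>2)"

type_synonym state = "(real \<Rightarrow> complex) \<times> (real \<Rightarrow> complex) \<times> complex \<times> complex"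

definition Hsp :: "real \<Rightarrow> state set" where
  "Hsp L = {(w, v, \<xi>, \<psi>). H2 L w \<and> H1 L v \<and> \<xi> = v L \<and> \<psi> = v 0}"

definition stnorm :: "real \<Rightarrow> state \<Rightarrow> real" where
  "stnorm L z = (case z of (w, v, \<xi>, \<psi>) \<Rightarrow>
     sqrt (H2norm2 L w + H1norm2 L v + (cmod \<xi>)\<^sup>2 + (cmod \<psi>)\<^sup>2))"

definition ipH :: "real \<Rightarrow> (real \<Rightarrow> real) \<Rightarrow> real \<Rightarrow> real \<Rightarrow> real \<Rightarrow> state \<Rightarrow> state \<Rightarrow> complex" where
  "ipH L P a1 a2 \<gamma> z1 z2 = (case z1 of (w1, v1, \<xi>1, \<psi>1) \<Rightarrow> case z2 of (w2, v2, \<xi>2, \<psi>2) \<Rightarrow>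
      of_real a1 * integral {0..L} (\<lambda>x.
          of_real \<gamma> * wd1 L (\<lambda>y. of_real (P y) * wd2 L w1 y) x
                    * wd1 L (\<lambda>y. of_real (P y) * cnj (wd2 L w2 y)) x
          + of_real (P x) * wd2 L w1 x * cnj (wd2 L w2 x))
    + of_real a1 * of_real \<gamma> * of_real (P L) * wd2 L w1 L * cnj (wd2 L w2 L)
    + of_real a2 * w1 0 * cnj (w2 0)
    + of_real a1 * integral {0..L} (\<lambda>x.
          of_real \<gamma> * of_real (P x) * wd1 L v1 x * cnj (wd1 L v2 x) + v1 x * cnj (v2 x))
    + of_real a1 * of_real (P L) * \<xi>1 * cnj \<xi>2
    + of_real a2 * of_real \<gamma> * \<psi>1 * cnj \<psi>2
    + (1/2) * (\<psi>1 - 2 * of_real a1 * of_real (P 0) * wd2 L w1 0 + 2 * of_real a2 * w1 0)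
            * (cnj \<psi>2 - 2 * of_real a1 * of_real (P 0) * cnj (wd2 L w2 0) + 2 * of_real a2 * cnj (w2 0)))"

definition normH :: "real \<Rightarrow> (real \<Rightarrow> real) \<Rightarrow> real \<Rightarrow> real \<Rightarrow> real \<Rightarrow> state \<Rightarrow> real" where
  "normH L P a1 a2 \<gamma> z = sqrt (Re (ipH L P a1 a2 \<gamma> z z))"

end

theory Submission
  imports Defs
begin

(*
  Expanding <z,z>_H, all of its terms are nonnegative: weighted L^2 norms of w', v', v and of the
  derivative (P w')' = P' w' + P w'', together with squared moduli of boundary values.  Since
  P0 <= P <= max P and P' is bounded, each term is at most a multiple of |z|^2; the boundary values
  w(0), w'(0), w'(L) are handled by the trace inequality |f(x)|^2 <= 2/L |f|^2 + 2 L |f'|^2.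
  Conversely |z|^2 is dominated by |z|_H^2: P >= P0 controls w', v' and xi, the identity
  P w'' = (P w')' - P' w' recovers w'', and w is controlled by w(0) and w'.
  Differentiating P w' needs the product rule for weak derivatives, which comes from Fubini's
  theorem on the two triangles of [0, x]^2.
*)

lemma norm_add_sq_le: "(norm (a + b))\<^sup>2 \<le> 2 * (norm a)\<^sup>2 + 2 * (norm (b :: 'a::real_normed_vector))\<^sup>2"
proof -
  have "(norm (a + b))\<^sup>2 \<le> (norm a + norm b)\<^sup>2"
    by (simp add: norm_triangle_ineq power_mono)
  also have "\<dots> \<le> 2 * (norm a)\<^sup>2 + 2 * (norm b)\<^sup>2"
    using sum_squares_ge_zero[of "norm a - norm b" 0] by (simp add: power2_eq_square algebra_simps)
  finally show ?thesis .
qed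

lemma norm_diff_add_sq_le:
  "(norm (x - y + z))\<^sup>2 \<le> 4 * (norm x)\<^sup>2 + 4 * (norm y)\<^sup>2 + 2 * (norm (z :: 'a::real_normed_vector))\<^sup>2"
  using norm_add_sq_le[of "x - y" z] norm_add_sq_le[of x "- y"] by simp

lemma norm_mult_sq_le:
  fixes a b :: "'a::real_normed_div_algebra"
  shows "norm a \<le> m \<Longrightarrow> (norm (a * b))\<^sup>2 \<le> m\<^sup>2 * (norm b)\<^sup>2"
  by (simp add: norm_mult power_mult_distrib mult_right_mono power_mono)

lemma sqrt_bounds_of_square_bounds:
  fixes R s K k :: real
  assumes "0 \<le> R" "0 \<le> s" "0 < k" "R \<le> K * s\<^sup>2" "s\<^sup>2 \<le> k * R"
  shows "s / sqrt k \<le> sqrt R" and "sqrt R \<le> sqrt K * s"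
proof -
  have "s \<le> sqrt k * sqrt R"
    using real_sqrt_le_mono[OF assms(5)] assms(2) by (simp add: real_sqrt_mult)
  then show "s / sqrt k \<le> sqrt R"
    using assms(3) by (simp add: divide_le_eq mult.commute)
  show "sqrt R \<le> sqrt K * s"
    using real_sqrt_le_mono[OF assms(4)] assms(2) by (simp add: real_sqrt_mult)
qed

section \<open>Products of integrals\<close>

lemma sigma_finite_lebesgue: "sigma_finite_measure (lebesgue :: real measure)"
proof
  show "\<exists>A. countable A \<and> A \<subseteq> sets (lebesgue::real measure) \<and> \<Union> A = space lebesgue
          \<and> (\<forall>a\<in>A. emeasure lebesgue a \<noteq> \<infinity>)"
  proof (intro exI[of _ "range (\<lambda>n::nat. {-real n..real n})"] conjI)
    have "x \<in> (\<Union>n::nat. {-real n..real n})" for x :: real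
    proof -
      obtain n :: nat where "\<bar>x\<bar> \<le> real n" using real_arch_simple by blast
      then show ?thesis by (intro UN_I[of n]) auto
    qed
    then show "\<Union> (range (\<lambda>n::nat. {-real n..real n})) = space lebesgue" by auto
  qed auto
qed

interpretation lebesgue_pair: pair_sigma_finite "lebesgue :: real measure" "lebesgue :: real measure"
  by (simp add: pair_sigma_finite_def sigma_finite_lebesgue)

lemma integrable_triangle_products:
  fixes g k :: "real \<Rightarrow> 'a::{real_normed_field,banach,second_countable_topology}"
  assumes g: "integrable lebesgue g" and k: "integrable lebesgue k"
  shows "integrable (lebesgue \<Otimes>\<^sub>M lebesgue) (\<lambda>(s, t). if t \<le> s then g s * k t else 0)"
    and "integrable (lebesgue \<Otimes>\<^sub>M lebesgue) (\<lambda>(s, t). if s < t then g s * k t else 0)"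
proof -
  let ?M = "lebesgue \<Otimes>\<^sub>M lebesgue :: (real \<times> real) measure"
  have [measurable]: "g \<in> borel_measurable lebesgue" "k \<in> borel_measurable lebesgue"
    using g k by auto
  have fst_meas: "fst \<in> borel_measurable ?M" and snd_meas: "snd \<in> borel_measurable ?M"
    using measurable_compose[OF measurable_fst id_borel_measurable_lebesgue]
      measurable_compose[OF measurable_snd id_borel_measurable_lebesgue] by (simp_all add: comp_def)
  have [measurable]: "Measurable.pred ?M (\<lambda>p. snd p \<le> fst p)" "Measurable.pred ?M (\<lambda>p. fst p < snd p)"
    unfolding pred_def
    by (rule borel_measurable_le[OF snd_meas fst_meas], rule borel_measurable_less[OF fst_meas snd_meas])
  have prod: "integrable ?M (\<lambda>p. g (fst p) * k (snd p))"
  proof (rule lebesgue_pair.Fubini_integrable)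
    show "integrable lebesgue (\<lambda>s. \<integral>t. norm (g (fst (s, t)) * k (snd (s, t))) \<partial>lebesgue)"
      using g by (simp add: norm_mult)
  qed (use k in simp_all)
  have "(\<lambda>(s, t). if t \<le> s then g s * k t else 0) = (\<lambda>p. if snd p \<le> fst p then g (fst p) * k (snd p) else 0)"
    "(\<lambda>(s, t). if s < t then g s * k t else 0) = (\<lambda>p. if fst p < snd p then g (fst p) * k (snd p) else 0)"
    by auto
  then show "integrable ?M (\<lambda>(s, t). if t \<le> s then g s * k t else 0)"
    and "integrable ?M (\<lambda>(s, t). if s < t then g s * k t else 0)"
    by (auto intro!: Bochner_Integration.integrable_bound[OF prod])
qed

lemma integral_mult_eq_triangles:
  fixes g k :: "real \<Rightarrow> 'a::{real_normed_field,banach,second_countable_topology}"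
  assumes g: "integrable lebesgue g" and k: "integrable lebesgue k"
  shows "integrable lebesgue (\<lambda>s. g s * (\<integral>t. indicator {..s} t *\<^sub>R k t \<partial>lebesgue))"
    and "integrable lebesgue (\<lambda>t. (\<integral>s. indicator {..<t} s *\<^sub>R g s \<partial>lebesgue) * k t)"
    and "(\<integral>s. g s \<partial>lebesgue) * (\<integral>t. k t \<partial>lebesgue) =
           (\<integral>s. g s * (\<integral>t. indicator {..s} t *\<^sub>R k t \<partial>lebesgue) \<partial>lebesgue)
         + (\<integral>t. (\<integral>s. indicator {..<t} s *\<^sub>R g s \<partial>lebesgue) * k t \<partial>lebesgue)"
proof -
  define f1 where "f1 s t = (if t \<le> s then g s * k t else 0)" for s t
  define f2 where "f2 s t = (if s < t then g s * k t else 0)" for s t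
  note int = integrable_triangle_products[OF g k, folded f1_def f2_def]
  have f1_eq: "f1 s = (\<lambda>t. g s * (indicator {..s} t *\<^sub>R k t))"
    and f2_eq: "f2 s = (\<lambda>t. g s * (indicator {s<..} t *\<^sub>R k t))"
    and f2_eq': "(\<lambda>s. f2 s t) = (\<lambda>s. (indicator {..<t} s *\<^sub>R g s) * k t)" for s t
    by (auto simp: fun_eq_iff f1_def f2_def indicator_def)
  have f1_int: "(\<integral>t. f1 s t \<partial>lebesgue) = g s * (\<integral>t. indicator {..s} t *\<^sub>R k t \<partial>lebesgue)"
    and f2_int: "(\<integral>s. f2 s t \<partial>lebesgue) = (\<integral>s. indicator {..<t} s *\<^sub>R g s \<partial>lebesgue) * k t" for s t
    by (simp_all only: f1_eq f2_eq' integral_mult_right_zero integral_mult_left_zero)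
  show "integrable lebesgue (\<lambda>s. g s * (\<integral>t. indicator {..s} t *\<^sub>R k t \<partial>lebesgue))"
    using lebesgue_pair.integrable_fst[OF int(1)] by (simp add: f1_int)
  show "integrable lebesgue (\<lambda>t. (\<integral>s. indicator {..<t} s *\<^sub>R g s \<partial>lebesgue) * k t)"
    using lebesgue_pair.integrable_snd[OF int(2)] by (simp add: f2_int)
  have split: "(\<integral>t. f1 s t \<partial>lebesgue) + (\<integral>t. f2 s t \<partial>lebesgue) = g s * (\<integral>t. k t \<partial>lebesgue)" for s
  proof -
    have "integrable lebesgue (f1 s)" "integrable lebesgue (f2 s)"
      unfolding f1_eq f2_eq using k by (auto intro: integrable_mult_right integrable_mult_indicator)
    moreover have "(\<lambda>t. f1 s t + f2 s t) = (\<lambda>t. g s * k t)"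
      by (auto simp: f1_def f2_def)
    ultimately show ?thesis by (simp flip: Bochner_Integration.integral_add)
  qed
  have "(\<integral>s. g s \<partial>lebesgue) * (\<integral>t. k t \<partial>lebesgue)
      = (\<integral>s. (\<integral>t. f1 s t \<partial>lebesgue) \<partial>lebesgue) + (\<integral>s. (\<integral>t. f2 s t \<partial>lebesgue) \<partial>lebesgue)"
    using lebesgue_pair.integrable_fst[OF int(1)] lebesgue_pair.integrable_fst[OF int(2)]
    by (simp add: split flip: Bochner_Integration.integral_add)
  also have "(\<integral>s. (\<integral>t. f2 s t \<partial>lebesgue) \<partial>lebesgue) = (\<integral>t. (\<integral>s. f2 s t \<partial>lebesgue) \<partial>lebesgue)"
    by (rule lebesgue_pair.Fubini_integral[OF int(2), symmetric])
  finally show "(\<integral>s. g s \<partial>lebesgue) * (\<integral>t. k t \<partial>lebesgue) =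
           (\<integral>s. g s * (\<integral>t. indicator {..s} t *\<^sub>R k t \<partial>lebesgue) \<partial>lebesgue)
         + (\<integral>t. (\<integral>s. indicator {..<t} s *\<^sub>R g s \<partial>lebesgue) * k t \<partial>lebesgue)"
    by (simp add: f1_int f2_int)
qed

lemma lebesgue_integral_prefix:
  fixes f :: "real \<Rightarrow> 'a::euclidean_space"
  assumes f: "f absolutely_integrable_on {a..b}" and c: "c \<in> {a..b}"
  shows "(\<integral>t. indicator {..c} t *\<^sub>R (indicator {a..b} t *\<^sub>R f t) \<partial>lebesgue) = integral {a..c} f"
    and "(\<integral>t. indicator {..<c} t *\<^sub>R (indicator {a..b} t *\<^sub>R f t) \<partial>lebesgue) = integral {a..c} f"
proof -
  have "(\<lambda>t. indicator {..c} t *\<^sub>R (indicator {a..b} t *\<^sub>R f t)) = (\<lambda>t. indicator {a..c} t *\<^sub>R f t)"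
    "(\<lambda>t. indicator {..<c} t *\<^sub>R (indicator {a..b} t *\<^sub>R f t)) = (\<lambda>t. indicator {a..<c} t *\<^sub>R f t)"
    using c by (auto simp: fun_eq_iff indicator_def)
  moreover have "(LINT t:{a..c}|lebesgue. f t) = integral {a..c} f"
    "(LINT t:{a..<c}|lebesgue. f t) = integral {a..<c} f"
    using c by (auto intro!: set_lebesgue_integral_eq_integral(2) set_integrable_subset[OF f])
  moreover have "integral {a..<c} f = integral {a..c} f"
    by (rule integral_subset_negligible) (auto intro: negligible_subset[of "{c}"])
  ultimately show "(\<integral>t. indicator {..c} t *\<^sub>R (indicator {a..b} t *\<^sub>R f t) \<partial>lebesgue) = integral {a..c} f"
    and "(\<integral>t. indicator {..<c} t *\<^sub>R (indicator {a..b} t *\<^sub>R f t) \<partial>lebesgue) = integral {a..c} f"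
    using c by (auto simp: set_lebesgue_integral_def)
qed

lemma integral_mult_eq_integral_prefix:
  fixes g k :: "real \<Rightarrow> 'a::{real_normed_field,euclidean_space}"
  assumes g: "g absolutely_integrable_on {a..b}" and k: "k absolutely_integrable_on {a..b}"
  shows "(\<lambda>s. g s * integral {a..s} k) absolutely_integrable_on {a..b}"
    and "(\<lambda>t. integral {a..t} g * k t) absolutely_integrable_on {a..b}"
    and "integral {a..b} g * integral {a..b} k =
           integral {a..b} (\<lambda>s. g s * integral {a..s} k) + integral {a..b} (\<lambda>t. integral {a..t} g * k t)"
proof -
  define g' where "g' = (\<lambda>s. indicator {a..b} s *\<^sub>R g s)"
  define k' where "k' = (\<lambda>t. indicator {a..b} t *\<^sub>R k t)"
  have "integrable lebesgue g'" "integrable lebesgue k'"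
    using g k by (simp_all add: set_integrable_def g'_def k'_def)
  note triangles = integral_mult_eq_triangles[OF this]
  have "g' s * (\<integral>t. indicator {..s} t *\<^sub>R k' t \<partial>lebesgue) = indicator {a..b} s *\<^sub>R (g s * integral {a..s} k)"
    and "(\<integral>s. indicator {..<t} s *\<^sub>R g' s \<partial>lebesgue) * k' t = indicator {a..b} t *\<^sub>R (integral {a..t} g * k t)"
    for s t
    using lebesgue_integral_prefix(1)[OF k, of s] lebesgue_integral_prefix(2)[OF g, of t]
    by (auto simp: g'_def k'_def indicator_def)
  then have left_eq: "(\<lambda>s. g' s * (\<integral>t. indicator {..s} t *\<^sub>R k' t \<partial>lebesgue))
      = (\<lambda>s. indicator {a..b} s *\<^sub>R (g s * integral {a..s} k))"
    and right_eq: "(\<lambda>t. (\<integral>s. indicator {..<t} s *\<^sub>R g' s \<partial>lebesgue) * k' t)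
      = (\<lambda>t. indicator {a..b} t *\<^sub>R (integral {a..t} g * k t))"
    by auto
  show left: "(\<lambda>s. g s * integral {a..s} k) absolutely_integrable_on {a..b}"
    using triangles(1) by (simp add: left_eq set_integrable_def)
  show right: "(\<lambda>t. integral {a..t} g * k t) absolutely_integrable_on {a..b}"
    using triangles(2) by (simp add: right_eq set_integrable_def)
  have "(\<integral>s. g' s \<partial>lebesgue) = integral {a..b} g" "(\<integral>t. k' t \<partial>lebesgue) = integral {a..b} k"
    using set_lebesgue_integral_eq_integral(2)[OF g] set_lebesgue_integral_eq_integral(2)[OF k]
    by (simp_all add: g'_def k'_def set_lebesgue_integral_def)
  then show "integral {a..b} g * integral {a..b} k =
      integral {a..b} (\<lambda>s. g s * integral {a..s} k) + integral {a..b} (\<lambda>t. integral {a..t} g * k t)"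
    using triangles(3) set_lebesgue_integral_eq_integral(2)[OF left] set_lebesgue_integral_eq_integral(2)[OF right]
    unfolding left_eq right_eq by (simp add: set_lebesgue_integral_def)
qed

lemma integral_product_rule:
  fixes g k :: "real \<Rightarrow> 'a::{real_normed_field,euclidean_space}"
  assumes g: "g absolutely_integrable_on {a..b}" and k: "k absolutely_integrable_on {a..b}"
  shows "(c + integral {a..b} g) * (d + integral {a..b} k)
    = c * d + integral {a..b} (\<lambda>s. g s * (d + integral {a..s} k) + (c + integral {a..s} g) * k s)"
proof -
  note prefix = integral_mult_eq_integral_prefix[OF g k]
  have "integral {a..b} (\<lambda>s. g s * (d + integral {a..s} k) + (c + integral {a..s} g) * k s)
      = integral {a..b} (\<lambda>s. (d * g s + c * k s) + (g s * integral {a..s} k + integral {a..s} g * k s))"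
    by (simp add: algebra_simps)
  also have "\<dots> = d * integral {a..b} g + c * integral {a..b} k + integral {a..b} g * integral {a..b} k"
  proof -
    have "g integrable_on {a..b}" "k integrable_on {a..b}"
      "(\<lambda>s. g s * integral {a..s} k) integrable_on {a..b}" "(\<lambda>t. integral {a..t} g * k t) integrable_on {a..b}"
      using prefix(1,2) g k by (simp_all add: absolutely_integrable_on_def)
    then show ?thesis
      using prefix(3) by (simp add: integral_add integrable_add integrable_on_mult_right integral_mult_right)
  qed
  finally show ?thesis by (simp add: algebra_simps)
qed

lemma integral_complex_of_real:
  "f integrable_on S \<Longrightarrow> integral S (\<lambda>x. complex_of_real (f x)) = complex_of_real (integral S f)"
  by (rule integral_unique[OF has_integral_of_real[OF integrable_integral]])

lemma continuous_on_Icc_norm_bound: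
  fixes f :: "real \<Rightarrow> 'a::real_normed_vector"
  assumes "continuous_on {a..b} f"
  obtains M where "\<And>x. x \<in> {a..b} \<Longrightarrow> norm (f x) \<le> M"
proof -
  have "bounded (f ` {a..b})"
    by (rule compact_imp_bounded[OF compact_continuous_image[OF assms compact_Icc]])
  then show ?thesis using that unfolding bounded_iff by blast
qed

lemma continuous_mult_integrable_real:
  fixes r :: "real \<Rightarrow> real"
  assumes r: "continuous_on {a..b} r" and f: "f integrable_on {a..b}" and f0: "\<And>x. x \<in> {a..b} \<Longrightarrow> 0 \<le> f x"
  shows "(\<lambda>x. r x * f x) integrable_on {a..b}"
proof -
  have "(\<lambda>x. r x * f x) absolutely_integrable_on {a..b}"
  proof (rule absolutely_integrable_bounded_measurable_product_real)
    show "r \<in> borel_measurable (lebesgue_on {a..b})"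
      by (rule continuous_imp_measurable_on_sets_lebesgue[OF r]) simp
    show "bounded (r ` {a..b})"
      by (rule compact_imp_bounded[OF compact_continuous_image[OF r compact_Icc]])
  qed (use nonnegative_absolutely_integrable_1[OF f f0] in simp_all)
  then show ?thesis using absolutely_integrable_on_def by blast
qed

lemma continuous_mult_square_integrable:
  fixes h g :: "real \<Rightarrow> complex"
  assumes h: "continuous_on {a..b} h" and g: "g absolutely_integrable_on {a..b}"
    and g2: "(\<lambda>x. (cmod (g x))\<^sup>2) integrable_on {a..b}"
  shows "(\<lambda>x. h x * g x) absolutely_integrable_on {a..b}"
    and "(\<lambda>x. (cmod (h x * g x))\<^sup>2) integrable_on {a..b}"
proof -
  show "(\<lambda>x. h x * g x) absolutely_integrable_on {a..b}"
  proof (rule absolutely_integrable_bounded_measurable_product[OF bilinear_times _ _ _ g])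
    show "h \<in> borel_measurable (lebesgue_on {a..b})"
      by (rule continuous_imp_measurable_on_sets_lebesgue[OF h]) simp
    show "bounded (h ` {a..b})"
      by (rule compact_imp_bounded[OF compact_continuous_image[OF h compact_Icc]])
  qed simp
  have "continuous_on {a..b} (\<lambda>x. (cmod (h x))\<^sup>2)"
    using h by (intro continuous_intros)
  from continuous_mult_integrable_real[OF this g2]
  show "(\<lambda>x. (cmod (h x * g x))\<^sup>2) integrable_on {a..b}"
    by (simp add: norm_mult power_mult_distrib)
qed

lemma square_integrable_add:
  fixes f g :: "real \<Rightarrow> complex"
  assumes "f absolutely_integrable_on S" "g absolutely_integrable_on S" "S \<in> sets lebesgue"
    and "(\<lambda>x. (cmod (f x))\<^sup>2) integrable_on S" "(\<lambda>x. (cmod (g x))\<^sup>2) integrable_on S"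
  shows "(\<lambda>x. (cmod (f x + g x))\<^sup>2) integrable_on S"
proof (rule measurable_bounded_by_integrable_imp_integrable_real)
  have "(\<lambda>x. f x + g x) \<in> borel_measurable (lebesgue_on S)"
    by (rule conjunct1[OF iffD1[OF absolutely_integrable_measurable[OF assms(3)] set_integral_add(1)[OF assms(1,2)]]])
  then show "(\<lambda>x. (cmod (f x + g x))\<^sup>2) \<in> borel_measurable (lebesgue_on S)"
    by measurable
  show "(\<lambda>x. 2 * (cmod (f x))\<^sup>2 + 2 * (cmod (g x))\<^sup>2) integrable_on S"
    using integrable_add[OF integrable_cmul[OF assms(4), of 2] integrable_cmul[OF assms(5), of 2]] by simp
  show "\<bar>(cmod (f x + g x))\<^sup>2\<bar> \<le> 2 * (cmod (f x))\<^sup>2 + 2 * (cmod (g x))\<^sup>2" for x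
    using norm_add_sq_le[of "f x" "g x"] by simp
qed (fact assms(3))

lemma square_integral_norm_le:
  fixes g :: "real \<Rightarrow> 'a::real_normed_vector"
  assumes g1: "(\<lambda>t. norm (g t)) integrable_on {0..L}" and g2: "(\<lambda>t. (norm (g t))\<^sup>2) integrable_on {0..L}"
    and "0 \<le> L"
  shows "(integral {0..L} (\<lambda>t. norm (g t)))\<^sup>2 \<le> L * integral {0..L} (\<lambda>t. (norm (g t))\<^sup>2)"
proof -
  define I where "I = integral {0..L} (\<lambda>t. norm (g t))"
  define G where "G = integral {0..L} (\<lambda>t. (norm (g t))\<^sup>2)"
  have "I \<ge> 0" "G \<ge> 0" unfolding I_def G_def by (auto intro: integral_nonneg g1 g2)
  show ?thesis
  proof (cases "I = 0")
    case True then show ?thesis using \<open>G \<ge> 0\<close> \<open>0 \<le> L\<close> by (simp add: I_def[symmetric] G_def[symmetric])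
  next
    case False
    then have "I > 0" using \<open>I \<ge> 0\<close> by simp
    have "L > 0" using False \<open>0 \<le> L\<close> by (cases "L = 0") (auto simp: I_def)
    define e where "e = I / L"
    have "e > 0" using \<open>I > 0\<close> \<open>L > 0\<close> by (simp add: e_def)
    \<comment> \<open>AM-GM: \<open>|g| \<le> e/2 + |g|\<^sup>2/(2e)\<close>, integrated and optimised at \<open>e = I/L\<close>.\<close>
    have am_gm: "norm (g t) \<le> e/2 + (1/(2*e)) * (norm (g t))\<^sup>2" for t
      using sum_squares_ge_zero[of "e - norm (g t)" 0] \<open>e > 0\<close>
      by (simp add: field_simps power2_eq_square)
    have "I \<le> integral {0..L} (\<lambda>t. e/2 + (1/(2*e)) * (norm (g t))\<^sup>2)"
      unfolding I_def
      by (rule integral_le[OF g1 integrable_add[OF integrable_const_ivl integrable_cmul[OF g2, simplified]]])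
        (use am_gm in auto)
    also have "\<dots> = L * (e/2) + (1/(2*e)) * G"
      using integral_add[OF integrable_const_ivl integrable_cmul[OF g2, of "1/(2*e)"]] \<open>0 \<le> L\<close>
      by (simp add: G_def)
    also have "\<dots> = I/2 + L * G / (2 * I)" using \<open>L > 0\<close> \<open>I > 0\<close> by (simp add: e_def field_simps)
    finally have "I * I \<le> L * G" using \<open>I > 0\<close> by (simp add: field_simps)
    then show ?thesis by (simp add: I_def G_def power2_eq_square)
  qed
qed

text \<open>Lebesgue differentiation: almost every \<open>x\<close> is a Lebesgue point of \<open>d\<close>, and there the averages
  of \<open>d\<close> over \<open>[x, x + h]\<close> vanish.\<close>
lemma ae_zero_if_interval_integrals_zero:
  fixes d :: "real \<Rightarrow> 'a::euclidean_space"
  assumes d: "d integrable_on {a..b}"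
    and zero: "\<And>x y. a \<le> x \<Longrightarrow> x \<le> y \<Longrightarrow> y \<le> b \<Longrightarrow> integral {x..y} d = 0"
  obtains N where "negligible N" "\<And>x. x \<in> {a..b} - N \<Longrightarrow> d x = 0"
proof -
  define d0 where "d0 x = (if x \<in> {a..b} then d x else 0)" for x
  have "d0 integrable_on UNIV"
    using d unfolding d0_def by (rule integrable_restrict_UNIV[THEN iffD2])
  then have "d0 integrable_on cbox u v" for u v
    using integrable_on_subcbox by blast
  then obtain N where N: "negligible N" and lim: "\<And>x e. x \<notin> N \<Longrightarrow> 0 < e \<Longrightarrow> \<exists>\<delta>>0. \<forall>h. 0 < h \<and> h < \<delta> \<longrightarrow>
       norm (integral (cbox x (x + h *\<^sub>R One)) d0 /\<^sub>R h ^ DIM(real) - d0 x) < e"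
    using integrable_ccontinuous_explicit[of d0] by blast
  show ?thesis
  proof
    show "negligible (N \<union> {b})" using N by simp
    fix x assume x: "x \<in> {a..b} - (N \<union> {b})"
    have small: "norm (d x) < e" if e: "e > 0" for e
    proof -
      obtain \<delta> where "\<delta> > 0" and \<delta>: "\<forall>h. 0 < h \<and> h < \<delta> \<longrightarrow>
          norm (integral (cbox x (x + h *\<^sub>R One)) d0 /\<^sub>R h ^ DIM(real) - d0 x) < e"
        using lim[OF _ e] x by blast
      define h where "h = min \<delta> (b - x) / 2"
      have h: "0 < h" "h < \<delta>" "x + h \<le> b"
        using \<open>\<delta> > 0\<close> x unfolding h_def by (auto simp: min_def field_simps)
      have "integral {x..x + h} d0 = integral {x..x + h} d"
        by (rule integral_cong) (use x h in \<open>auto simp: d0_def\<close>)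
      then have "integral (cbox x (x + h *\<^sub>R One)) d0 = 0" using zero[of x "x + h"] x h by simp
      moreover have "d0 x = d x" using x by (simp add: d0_def)
      ultimately show ?thesis using \<delta> h by auto
    qed
    show "d x = 0"
      using small[of "norm (d x)"] by (cases "d x = 0") auto
  qed
qed

section \<open>Weak derivatives\<close>

lemma has_wderiv_integrable:
  assumes "has_wderiv L f g"
  shows "g absolutely_integrable_on {0..L}" "g integrable_on {0..L}"
    and "(\<lambda>x. norm (g x)) integrable_on {0..L}" "(\<lambda>x. (cmod (g x))\<^sup>2) integrable_on {0..L}"
  using assms unfolding has_wderiv_def absolutely_integrable_on_def by blast+

lemma has_wderiv_eq: "has_wderiv L f g \<Longrightarrow> x \<in> {0..L} \<Longrightarrow> f x = f 0 + integral {0..x} g"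
  unfolding has_wderiv_def by blast

lemma has_wderiv_diff:
  assumes "has_wderiv L f g" "0 \<le> y" "y \<le> x" "x \<le> L"
  shows "f x - f y = integral {y..x} g"
proof -
  have "g integrable_on {0..x}"
    using has_wderiv_integrable(2)[OF assms(1)] assms by (auto intro: integrable_subinterval_real)
  then have "integral {0..x} g = integral {0..y} g + integral {y..x} g"
    using assms by (simp add: Henstock_Kurzweil_Integration.integral_combine)
  then show ?thesis using has_wderiv_eq[OF assms(1), of x] has_wderiv_eq[OF assms(1), of y] assms by simp
qed

lemma has_wderiv_continuous_on:
  assumes "has_wderiv L f g"
  shows "continuous_on {0..L} f"
proof -
  have "continuous_on {0..L} (\<lambda>x. f 0 + integral {0..x} g)"
    using indefinite_integral_continuous_1[OF has_wderiv_integrable(2)[OF assms]] by (intro continuous_intros)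
  then show ?thesis by (rule continuous_on_eq) (simp add: has_wderiv_eq[OF assms, symmetric])
qed

lemma has_wderiv_unique:
  assumes "has_wderiv L f g1" "has_wderiv L f g2"
  obtains N where "negligible N" "\<And>x. x \<in> {0..L} - N \<Longrightarrow> g1 x = g2 x"
proof -
  have "(\<lambda>x. g1 x - g2 x) integrable_on {0..L}"
    using has_wderiv_integrable(2)[OF assms(1)] has_wderiv_integrable(2)[OF assms(2)] by (rule integrable_diff)
  moreover have "integral {x..y} (\<lambda>x. g1 x - g2 x) = 0" if "0 \<le> x" "x \<le> y" "y \<le> L" for x y
  proof -
    have "g1 integrable_on {x..y}" "g2 integrable_on {x..y}"
      using has_wderiv_integrable(2)[OF assms(1)] has_wderiv_integrable(2)[OF assms(2)] that
      by (auto intro: integrable_subinterval_real)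
    then show ?thesis
      using has_wderiv_diff[OF assms(1), of x y] has_wderiv_diff[OF assms(2), of x y] that
      by (simp add: integral_diff)
  qed
  ultimately show ?thesis
    using ae_zero_if_interval_integrals_zero[of "\<lambda>x. g1 x - g2 x" 0 L] that by auto
qed

lemma has_wderiv_cnj:
  assumes "has_wderiv L f g"
  shows "has_wderiv L (\<lambda>x. cnj (f x)) (\<lambda>x. cnj (g x))"
  unfolding has_wderiv_def
proof (intro conjI ballI)
  have "(\<lambda>x. indicator {0..L} x *\<^sub>R cnj (g x)) = (\<lambda>x. cnj (indicator {0..L} x *\<^sub>R g x))"
    by (auto simp: fun_eq_iff indicator_def)
  moreover have "integrable lebesgue (\<lambda>x. cnj (indicator {0..L} x *\<^sub>R g x))"
    using has_wderiv_integrable(1)[OF assms] unfolding set_integrable_def by (rule integrable_cnj)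
  ultimately show "(\<lambda>x. cnj (g x)) absolutely_integrable_on {0..L}"
    unfolding set_integrable_def by simp
  show "(\<lambda>x. (cmod (cnj (g x)))\<^sup>2) integrable_on {0..L}"
    using has_wderiv_integrable(4)[OF assms] by simp
  fix x assume "x \<in> {0..L}"
  then have "f x = f 0 + integral {0..x} g" by (rule has_wderiv_eq[OF assms])
  then show "cnj (f x) = cnj (f 0) + integral {0..x} (\<lambda>x. cnj (g x))"
    by (simp add: integral_cnj)
qed

lemma has_wderiv_mult:
  assumes f: "has_wderiv L f g" and h: "has_wderiv L h k"
  shows "has_wderiv L (\<lambda>x. f x * h x) (\<lambda>x. g x * h x + f x * k x)"
proof -
  note g = has_wderiv_integrable[OF f] and k = has_wderiv_integrable[OF h]
  have gh: "(\<lambda>x. g x * h x) absolutely_integrable_on {0..L}" "(\<lambda>x. (cmod (g x * h x))\<^sup>2) integrable_on {0..L}"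
    using continuous_mult_square_integrable[OF has_wderiv_continuous_on[OF h] g(1) g(4)]
    by (simp_all add: mult.commute)
  have fk: "(\<lambda>x. f x * k x) absolutely_integrable_on {0..L}" "(\<lambda>x. (cmod (f x * k x))\<^sup>2) integrable_on {0..L}"
    using continuous_mult_square_integrable[OF has_wderiv_continuous_on[OF f] k(1) k(4)] by simp_all
  have "f x * h x = f 0 * h 0 + integral {0..x} (\<lambda>s. g s * h s + f s * k s)" if x: "x \<in> {0..L}" for x
  proof -
    have "g absolutely_integrable_on {0..x}" "k absolutely_integrable_on {0..x}"
      using set_integrable_subset[OF g(1)] set_integrable_subset[OF k(1)] x by auto
    note product = integral_product_rule[OF this, of "f 0" "h 0"]
    have "integral {0..x} (\<lambda>s. g s * (h 0 + integral {0..s} k) + (f 0 + integral {0..s} g) * k s)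
        = integral {0..x} (\<lambda>s. g s * h s + f s * k s)"
    proof (rule integral_cong)
      fix s assume "s \<in> {0..x}"
      then have s: "s \<in> {0..L}" using x by auto
      show "g s * (h 0 + integral {0..s} k) + (f 0 + integral {0..s} g) * k s = g s * h s + f s * k s"
        using has_wderiv_eq[OF f s] has_wderiv_eq[OF h s] by simp
    qed
    then show ?thesis
      using product has_wderiv_eq[OF f x] has_wderiv_eq[OF h x] by simp
  qed
  moreover have "(\<lambda>x. g x * h x + f x * k x) absolutely_integrable_on {0..L}"
    using gh(1) fk(1) by (rule set_integral_add(1))
  moreover have "(\<lambda>x. (cmod (g x * h x + f x * k x))\<^sup>2) integrable_on {0..L}"
    using square_integrable_add[OF gh(1) fk(1) _ gh(2) fk(2)] by simp
  ultimately show ?thesis unfolding has_wderiv_def by blast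
qed

definition sq_L2 :: "real \<Rightarrow> (real \<Rightarrow> complex) \<Rightarrow> real" where
  "sq_L2 L f = integral {0..L} (\<lambda>x. (cmod (f x))\<^sup>2)"

lemma sq_L2_nonneg: "(\<lambda>x. (cmod (f x))\<^sup>2) integrable_on {0..L} \<Longrightarrow> 0 \<le> sq_L2 L f"
  unfolding sq_L2_def by (rule integral_nonneg) auto

lemma has_wderiv_norm_sq_le:
  assumes f: "has_wderiv L f g" and x: "x \<in> {0..L}" and y: "y \<in> {0..L}"
  shows "(cmod (f x))\<^sup>2 \<le> 2 * (cmod (f y))\<^sup>2 + 2 * L * sq_L2 L g"
proof -
  note g = has_wderiv_integrable[OF f]
  have osc: "cmod (f x - f y) \<le> integral {0..L} (\<lambda>t. cmod (g t))"
    if "y \<le> x" "x \<in> {0..L}" "y \<in> {0..L}" for x y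
  proof -
    have "cmod (f x - f y) = cmod (integral {y..x} g)" using has_wderiv_diff[OF f] that by simp
    also have "\<dots> \<le> integral {y..x} (\<lambda>t. cmod (g t))"
      by (rule integral_norm_bound_integral) (use g that in \<open>auto intro: integrable_subinterval_real\<close>)
    also have "\<dots> \<le> integral {0..L} (\<lambda>t. cmod (g t))"
      by (rule integral_subset_le) (use g that in \<open>auto intro: integrable_subinterval_real\<close>)
    finally show ?thesis .
  qed
  have "cmod (f x - f y) \<le> integral {0..L} (\<lambda>t. cmod (g t))"
    using osc[of y x] osc[of x y] x y by (cases "y \<le> x") (auto simp: norm_minus_commute)
  then have "cmod (f x) \<le> cmod (f y) + integral {0..L} (\<lambda>t. cmod (g t))"
    using norm_triangle_ineq2[of "f x" "f y"] by linarith
  then have "(cmod (f x))\<^sup>2 \<le> (cmod (f y) + integral {0..L} (\<lambda>t. cmod (g t)))\<^sup>2"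
    by (rule power_mono) simp
  also have "\<dots> \<le> 2 * (cmod (f y))\<^sup>2 + 2 * (integral {0..L} (\<lambda>t. cmod (g t)))\<^sup>2"
    using norm_add_sq_le[of "cmod (f y)" "integral {0..L} (\<lambda>t. cmod (g t))"] by simp
  also have "\<dots> \<le> 2 * (cmod (f y))\<^sup>2 + 2 * L * sq_L2 L g"
    using square_integral_norm_le[OF g(3,4)] x by (simp add: sq_L2_def)
  finally show ?thesis .
qed

text \<open>The Sobolev trace inequality on \<open>[0,L]\<close>: average the previous bound over \<open>y\<close>.\<close>
lemma has_wderiv_trace_le:
  assumes f: "has_wderiv L f g" and f2: "(\<lambda>x. (cmod (f x))\<^sup>2) integrable_on {0..L}"
    and L: "0 < L" and x: "x \<in> {0..L}"
  shows "(cmod (f x))\<^sup>2 \<le> 2 / L * sq_L2 L f + 2 * L * sq_L2 L g"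
proof -
  define c where "c = 2 * L * sq_L2 L g"
  have "integral {0..L} (\<lambda>y. (cmod (f x))\<^sup>2) \<le> integral {0..L} (\<lambda>y. 2 * (cmod (f y))\<^sup>2 + c)"
  proof (rule integral_le)
    show "(\<lambda>y. 2 * (cmod (f y))\<^sup>2 + c) integrable_on {0..L}"
      using integrable_add[OF integrable_cmul[OF f2, of 2] integrable_const_ivl[of c 0 L]] by simp
  qed (use has_wderiv_norm_sq_le[OF f x] in \<open>auto simp: c_def\<close>)
  also have "\<dots> = 2 * sq_L2 L f + L * c"
    using integral_add[OF integrable_cmul[OF f2, of 2] integrable_const_ivl[of c 0 L]] L
    by (simp add: sq_L2_def integral_mult_right)
  finally have "L * (cmod (f x))\<^sup>2 \<le> 2 * sq_L2 L f + L * c" using L by simp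
  then show ?thesis using L by (simp add: c_def field_simps)
qed

lemma sq_L2_le_boundary:
  assumes f: "has_wderiv L f g" and f2: "(\<lambda>x. (cmod (f x))\<^sup>2) integrable_on {0..L}" and L: "0 \<le> L"
  shows "sq_L2 L f \<le> 2 * L * (cmod (f 0))\<^sup>2 + 2 * L\<^sup>2 * sq_L2 L g"
proof -
  have "sq_L2 L f \<le> integral {0..L} (\<lambda>x. 2 * (cmod (f 0))\<^sup>2 + 2 * L * sq_L2 L g)"
    unfolding sq_L2_def[of L f]
    by (rule integral_le[OF f2 integrable_const_ivl]) (use has_wderiv_norm_sq_le[OF f] L in auto)
  then show ?thesis using L by (simp add: algebra_simps power2_eq_square)
qed

lemma sq_L2_le_combination:
  assumes "\<And>x. x \<in> {0..L} \<Longrightarrow> (cmod (f x))\<^sup>2 \<le> a * (cmod (g x))\<^sup>2 + b * (cmod (h x))\<^sup>2"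
    and "(\<lambda>x. (cmod (f x))\<^sup>2) integrable_on {0..L}" "(\<lambda>x. (cmod (g x))\<^sup>2) integrable_on {0..L}"
    and "(\<lambda>x. (cmod (h x))\<^sup>2) integrable_on {0..L}"
  shows "sq_L2 L f \<le> a * sq_L2 L g + b * sq_L2 L h"
proof -
  have ab: "(\<lambda>x. a * (cmod (g x))\<^sup>2) integrable_on {0..L}" "(\<lambda>x. b * (cmod (h x))\<^sup>2) integrable_on {0..L}"
    using integrable_cmul[OF assms(3), of a] integrable_cmul[OF assms(4), of b] by simp_all
  have "sq_L2 L f \<le> integral {0..L} (\<lambda>x. a * (cmod (g x))\<^sup>2 + b * (cmod (h x))\<^sup>2)"
    unfolding sq_L2_def by (rule integral_le[OF assms(2) integrable_add[OF ab]]) (use assms(1) in auto)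
  also have "\<dots> = a * sq_L2 L g + b * sq_L2 L h"
    using integral_add[OF ab] by (simp add: sq_L2_def)
  finally show ?thesis .
qed

lemma weighted_sq_L2_bounds:
  fixes p :: "real \<Rightarrow> real"
  assumes p: "continuous_on {0..L} p" "\<And>x. x \<in> {0..L} \<Longrightarrow> lo \<le> p x" "\<And>x. x \<in> {0..L} \<Longrightarrow> p x \<le> hi"
    and f: "(\<lambda>x. (cmod (f x))\<^sup>2) integrable_on {0..L}"
  shows "(\<lambda>x. p x * (cmod (f x))\<^sup>2) integrable_on {0..L}"
    and "lo * sq_L2 L f \<le> integral {0..L} (\<lambda>x. p x * (cmod (f x))\<^sup>2)"
    and "integral {0..L} (\<lambda>x. p x * (cmod (f x))\<^sup>2) \<le> hi * sq_L2 L f"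
proof -
  show int: "(\<lambda>x. p x * (cmod (f x))\<^sup>2) integrable_on {0..L}"
    by (rule continuous_mult_integrable_real[OF p(1) f]) simp
  show "lo * sq_L2 L f \<le> integral {0..L} (\<lambda>x. p x * (cmod (f x))\<^sup>2)"
    unfolding sq_L2_def integral_mult_right[symmetric]
    by (rule integral_le[OF integrable_cmul[OF f, of lo, simplified] int]) (simp add: mult_right_mono p(2))
  show "integral {0..L} (\<lambda>x. p x * (cmod (f x))\<^sup>2) \<le> hi * sq_L2 L f"
    unfolding sq_L2_def integral_mult_right[symmetric]
    by (rule integral_le[OF int integrable_cmul[OF f, of hi, simplified]]) (simp add: mult_right_mono p(3))
qed

section \<open>The energy of a state\<close>

locale tension_energy =
  fixes L P0 Pm M a1 a2 \<gamma> :: real and P :: "real \<Rightarrow> real" and P' :: "real \<Rightarrow> complex"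
  assumes L_pos: "0 < L"
    and P_wderiv: "has_wderiv L (\<lambda>x. complex_of_real (P x)) P'"
    and P0_pos: "0 < P0"
    and P_ge: "\<And>x. x \<in> {0..L} \<Longrightarrow> P0 \<le> P x"
    and P_le: "\<And>x. x \<in> {0..L} \<Longrightarrow> P x \<le> Pm"
    and P'_le: "\<And>x. x \<in> {0..L} \<Longrightarrow> cmod (P' x) \<le> M"
    and a1_pos: "0 < a1" and a2_pos: "0 < a2" and \<gamma>_pos: "0 < \<gamma>"
begin

lemma P_continuous: "continuous_on {0..L} P"
  using continuous_on_Re[OF has_wderiv_continuous_on[OF P_wderiv]] by simp

lemma P_endpoints: "P0 \<le> P 0" "P 0 \<le> Pm" "P0 \<le> P L" "P L \<le> Pm"
  using P_ge P_le L_pos by auto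

lemma Pm_pos: "0 < Pm"
  using P_endpoints P0_pos by linarith

lemma P_weighted_bounds:
  assumes f: "(\<lambda>x. (cmod (f x))\<^sup>2) integrable_on {0..L}"
  shows "(\<lambda>x. P x * (cmod (f x))\<^sup>2) integrable_on {0..L}"
    and "P0 * sq_L2 L f \<le> integral {0..L} (\<lambda>x. P x * (cmod (f x))\<^sup>2)"
    and "integral {0..L} (\<lambda>x. P x * (cmod (f x))\<^sup>2) \<le> Pm * sq_L2 L f"
  using weighted_sq_L2_bounds[OF P_continuous _ _ f, of P0 Pm] P_ge P_le by blast+

text \<open>The weak derivative \<open>(P w')'\<close> of the paper, written out by the product rule.\<close>
definition flux_deriv :: "(real \<Rightarrow> complex) \<Rightarrow> real \<Rightarrow> complex" where
  "flux_deriv w x = P' x * wd2 L w x + complex_of_real (P x) * wd1 L (wd2 L w) x"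

definition energy :: "state \<Rightarrow> real" where
  "energy z = (case z of (w, v, \<xi>, \<psi>) \<Rightarrow>
      a1 * (\<gamma> * sq_L2 L (flux_deriv w) + integral {0..L} (\<lambda>x. P x * (cmod (wd2 L w x))\<^sup>2))
    + a1 * \<gamma> * P L * (cmod (wd2 L w L))\<^sup>2 + a2 * (cmod (w 0))\<^sup>2
    + a1 * (\<gamma> * integral {0..L} (\<lambda>x. P x * (cmod (wd1 L v x))\<^sup>2) + sq_L2 L v)
    + a1 * P L * (cmod \<xi>)\<^sup>2 + a2 * \<gamma> * (cmod \<psi>)\<^sup>2
    + 1/2 * (cmod (\<psi> - 2 * of_real a1 * of_real (P 0) * wd2 L w 0 + 2 * of_real a2 * w 0))\<^sup>2)"

definition upper_const :: real where
  "upper_const = a1 * (\<gamma> * (2 * M\<^sup>2 + 2 * Pm\<^sup>2) + Pm) + (a1 * \<gamma> * Pm + a2) * (2 / L + 2 * L)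
     + a1 * (\<gamma> * Pm + 1) + a1 * Pm + a2 * \<gamma> + 2 + (8 * a1\<^sup>2 * Pm\<^sup>2 + 4 * a2\<^sup>2) * (2 / L + 2 * L)"

definition lower_const :: real where
  "lower_const = 2 * L / a2 + 2 * L\<^sup>2 / (a1 * P0) + 1 / (a1 * P0) + 2 / (P0\<^sup>2 * a1 * \<gamma>)
     + 2 * M\<^sup>2 / (P0\<^sup>2 * a1 * P0) + 1 / a1 + 1 / (a1 * \<gamma> * P0) + 1 / (a1 * P0) + 1 / (a2 * \<gamma>)"

lemma upper_const_pos: "0 < upper_const"
proof -
  have "0 \<le> a1 * (\<gamma> * (2 * M\<^sup>2 + 2 * Pm\<^sup>2) + Pm)" "0 \<le> (a1 * \<gamma> * Pm + a2) * (2 / L + 2 * L)"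
    "0 \<le> a1 * (\<gamma> * Pm + 1)" "0 \<le> a1 * Pm" "0 \<le> a2 * \<gamma>"
    "0 \<le> (8 * a1\<^sup>2 * Pm\<^sup>2 + 4 * a2\<^sup>2) * (2 / L + 2 * L)"
    using a1_pos a2_pos \<gamma>_pos L_pos Pm_pos by (auto intro!: mult_nonneg_nonneg add_nonneg_nonneg)
  then show ?thesis unfolding upper_const_def by linarith
qed

lemma lower_const_pos: "0 < lower_const"
  using a1_pos a2_pos \<gamma>_pos L_pos P0_pos unfolding lower_const_def
  by (intro add_pos_pos add_nonneg_pos add_nonneg_nonneg divide_nonneg_pos mult_pos_pos) auto

context
  fixes w v :: "real \<Rightarrow> complex" and \<xi> \<psi> :: complex
  assumes state: "(w, v, \<xi>, \<psi>) \<in> Hsp L"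
begin

lemma state_wderiv:
  "has_wderiv L w (wd2 L w)" "has_wderiv L (wd2 L w) (wd1 L (wd2 L w))" "has_wderiv L v (wd1 L v)"
proof -
  have "H2 L w" "H1 L v" using state by (auto simp: Hsp_def)
  then obtain g where "has_wderiv L w g \<and> H1 L g" and "\<exists>h. has_wderiv L v h"
    unfolding H2_def H1_def by blast
  from this(1) have w: "has_wderiv L w (wd2 L w) \<and> H1 L (wd2 L w)"
    unfolding wd2_def by (rule someI[where P = "\<lambda>g. has_wderiv L w g \<and> H1 L g"])
  then show "has_wderiv L w (wd2 L w)" by simp
  show "has_wderiv L (wd2 L w) (wd1 L (wd2 L w))" "has_wderiv L v (wd1 L v)"
    using w \<open>\<exists>h. has_wderiv L v h\<close> unfolding H1_def wd1_def by (auto intro: someI[of "has_wderiv L _"])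
qed

lemma state_square_integrable:
  "(\<lambda>x. (cmod (w x))\<^sup>2) integrable_on {0..L}" "(\<lambda>x. (cmod (wd2 L w x))\<^sup>2) integrable_on {0..L}"
  "(\<lambda>x. (cmod (wd1 L (wd2 L w) x))\<^sup>2) integrable_on {0..L}"
  "(\<lambda>x. (cmod (v x))\<^sup>2) integrable_on {0..L}" "(\<lambda>x. (cmod (wd1 L v x))\<^sup>2) integrable_on {0..L}"
  using state has_wderiv_integrable(4)[OF state_wderiv(1)] has_wderiv_integrable(4)[OF state_wderiv(2)]
    has_wderiv_integrable(4)[OF state_wderiv(3)]
  by (auto simp: Hsp_def H1_def H2_def)

lemma flux_wderiv: "has_wderiv L (\<lambda>x. complex_of_real (P x) * wd2 L w x) (flux_deriv w)"
  using has_wderiv_mult[OF P_wderiv state_wderiv(2)] by (simp add: flux_deriv_def[abs_def])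

lemma flux_square_integrable: "(\<lambda>x. (cmod (flux_deriv w x))\<^sup>2) integrable_on {0..L}"
  by (rule has_wderiv_integrable(4)[OF flux_wderiv])

lemma flux_integral_eq:
  "integral {0..L} (\<lambda>x. of_real \<gamma> * wd1 L (\<lambda>y. of_real (P y) * wd2 L w y) x
        * wd1 L (\<lambda>y. of_real (P y) * cnj (wd2 L w y)) x + of_real (P x) * wd2 L w x * cnj (wd2 L w x))
     = of_real (\<gamma> * sq_L2 L (flux_deriv w) + integral {0..L} (\<lambda>x. P x * (cmod (wd2 L w x))\<^sup>2))"
proof -
  define A where "A = wd1 L (\<lambda>y. of_real (P y) * wd2 L w y)"
  define B where "B = wd1 L (\<lambda>y. of_real (P y) * cnj (wd2 L w y))"
  \<comment> \<open>\<open>A\<close> and \<open>B\<close> are arbitrary weak derivatives; they agree a.e. with \<open>(P w')'\<close> and its conjugate.\<close>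
  have cnj_flux: "has_wderiv L (\<lambda>y. of_real (P y) * cnj (wd2 L w y)) (\<lambda>x. cnj (flux_deriv w x))"
    using has_wderiv_cnj[OF flux_wderiv] by simp
  have "has_wderiv L (\<lambda>y. of_real (P y) * wd2 L w y) A"
    unfolding A_def wd1_def by (rule someI[of "has_wderiv L _", OF flux_wderiv])
  then obtain NA where NA: "negligible NA" "\<And>x. x \<in> {0..L} - NA \<Longrightarrow> A x = flux_deriv w x"
    using has_wderiv_unique[OF _ flux_wderiv] by blast
  have "has_wderiv L (\<lambda>y. of_real (P y) * cnj (wd2 L w y)) B"
    unfolding B_def wd1_def by (rule someI[of "has_wderiv L _", OF cnj_flux])
  then obtain NB where NB: "negligible NB" "\<And>x. x \<in> {0..L} - NB \<Longrightarrow> B x = cnj (flux_deriv w x)"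
    using has_wderiv_unique[OF _ cnj_flux] by blast
  have "integral {0..L} (\<lambda>x. of_real \<gamma> * A x * B x + of_real (P x) * wd2 L w x * cnj (wd2 L w x))
      = integral {0..L} (\<lambda>x. complex_of_real (\<gamma> * (cmod (flux_deriv w x))\<^sup>2 + P x * (cmod (wd2 L w x))\<^sup>2))"
  proof (rule integral_spike[of "NA \<union> NB"])
    fix x assume "x \<in> {0..L} - (NA \<union> NB)"
    then show "complex_of_real (\<gamma> * (cmod (flux_deriv w x))\<^sup>2 + P x * (cmod (wd2 L w x))\<^sup>2)
        = of_real \<gamma> * A x * B x + of_real (P x) * wd2 L w x * cnj (wd2 L w x)"
      using NA(2)[of x] NB(2)[of x] by (simp add: complex_norm_square[symmetric] mult.assoc)
  qed (use NA NB in simp)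
  also have "\<dots> = of_real (\<gamma> * sq_L2 L (flux_deriv w) + integral {0..L} (\<lambda>x. P x * (cmod (wd2 L w x))\<^sup>2))"
  proof -
    have int1: "(\<lambda>x. \<gamma> * (cmod (flux_deriv w x))\<^sup>2) integrable_on {0..L}"
      using integrable_cmul[OF flux_square_integrable, of \<gamma>] by simp
    have int2: "(\<lambda>x. P x * (cmod (wd2 L w x))\<^sup>2) integrable_on {0..L}"
      by (rule P_weighted_bounds(1)[OF state_square_integrable(2)])
    show ?thesis
      using integral_complex_of_real[OF integrable_add[OF int1 int2]] integral_add[OF int1 int2]
      by (simp add: integral_mult_right sq_L2_def)
  qed
  finally show ?thesis by (simp add: A_def B_def)
qed

lemma v_integral_eq:
  "integral {0..L} (\<lambda>x. of_real \<gamma> * of_real (P x) * wd1 L v x * cnj (wd1 L v x) + v x * cnj (v x))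
     = of_real (\<gamma> * integral {0..L} (\<lambda>x. P x * (cmod (wd1 L v x))\<^sup>2) + sq_L2 L v)"
proof -
  have "(\<lambda>x. P x * (cmod (wd1 L v x))\<^sup>2) integrable_on {0..L}"
    by (rule P_weighted_bounds(1)[OF state_square_integrable(5)])
  then have int: "(\<lambda>x. \<gamma> * (P x * (cmod (wd1 L v x))\<^sup>2)) integrable_on {0..L}"
    using integrable_cmul[of _ _ \<gamma>] by fastforce
  have "integral {0..L} (\<lambda>x. of_real \<gamma> * of_real (P x) * wd1 L v x * cnj (wd1 L v x) + v x * cnj (v x))
      = integral {0..L} (\<lambda>x. complex_of_real (\<gamma> * (P x * (cmod (wd1 L v x))\<^sup>2) + (cmod (v x))\<^sup>2))"
    by (rule integral_cong) (simp add: complex_norm_square[symmetric] mult.assoc)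
  also have "\<dots> = of_real (integral {0..L} (\<lambda>x. \<gamma> * (P x * (cmod (wd1 L v x))\<^sup>2) + (cmod (v x))\<^sup>2))"
    by (rule integral_complex_of_real[OF integrable_add[OF int state_square_integrable(4)]])
  also have "\<dots> = of_real (\<gamma> * integral {0..L} (\<lambda>x. P x * (cmod (wd1 L v x))\<^sup>2) + sq_L2 L v)"
    using integral_add[OF int state_square_integrable(4)] by (simp add: integral_mult_right sq_L2_def)
  finally show ?thesis .
qed

lemma ipH_eq_energy: "ipH L P a1 a2 \<gamma> (w, v, \<xi>, \<psi>) (w, v, \<xi>, \<psi>) = of_real (energy (w, v, \<xi>, \<psi>))"
proof -
  have times_cnj: "c * z * cnj z = c * of_real ((cmod z)\<^sup>2)" for c z :: complex
    by (simp add: complex_norm_square[symmetric] mult.assoc)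
  have boundary: "cnj \<psi> - 2 * of_real a1 * of_real (P 0) * cnj (wd2 L w 0) + 2 * of_real a2 * cnj (w 0)
      = cnj (\<psi> - 2 * of_real a1 * of_real (P 0) * wd2 L w 0 + 2 * of_real a2 * w 0)"
    by simp
  show ?thesis
    unfolding ipH_def energy_def prod.case flux_integral_eq v_integral_eq boundary
    unfolding times_cnj by (simp add: algebra_simps)
qed

lemma norm2_eq_sq_L2:
  "H2norm2 L w = sq_L2 L w + sq_L2 L (wd2 L w) + sq_L2 L (wd1 L (wd2 L w))"
  "H1norm2 L v = sq_L2 L v + sq_L2 L (wd1 L v)"
  using state_square_integrable
  by (simp_all add: H2norm2_def H1norm2_def sq_L2_def integral_add integrable_add)

lemma stnorm_sq_eq:
  "(stnorm L (w, v, \<xi>, \<psi>))\<^sup>2 = sq_L2 L w + sq_L2 L (wd2 L w) + sq_L2 L (wd1 L (wd2 L w))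
     + sq_L2 L v + sq_L2 L (wd1 L v) + (cmod \<xi>)\<^sup>2 + (cmod \<psi>)\<^sup>2"
  and stnorm_nonneg: "0 \<le> stnorm L (w, v, \<xi>, \<psi>)"
  using state_square_integrable by (simp_all add: stnorm_def norm2_eq_sq_L2 sq_L2_nonneg)

lemma flux_sq_L2_le:
  "sq_L2 L (flux_deriv w) \<le> 2 * M\<^sup>2 * sq_L2 L (wd2 L w) + 2 * Pm\<^sup>2 * sq_L2 L (wd1 L (wd2 L w))"
proof (rule sq_L2_le_combination[OF _ flux_square_integrable state_square_integrable(2,3)])
  fix x assume x: "x \<in> {0..L}"
  have "cmod (complex_of_real (P x)) \<le> Pm" using P_ge[OF x] P_le[OF x] P0_pos by simp
  from norm_mult_sq_le[OF this, of "wd1 L (wd2 L w) x"] norm_mult_sq_le[OF P'_le[OF x], of "wd2 L w x"]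
    norm_add_sq_le[of "P' x * wd2 L w x" "complex_of_real (P x) * wd1 L (wd2 L w) x"]
  show "(cmod (flux_deriv w x))\<^sup>2
      \<le> 2 * M\<^sup>2 * (cmod (wd2 L w x))\<^sup>2 + 2 * Pm\<^sup>2 * (cmod (wd1 L (wd2 L w) x))\<^sup>2"
    unfolding flux_deriv_def by linarith
qed

lemma second_deriv_sq_L2_le:
  "sq_L2 L (wd1 L (wd2 L w)) \<le> 2 / P0\<^sup>2 * sq_L2 L (flux_deriv w) + 2 * M\<^sup>2 / P0\<^sup>2 * sq_L2 L (wd2 L w)"
proof (rule sq_L2_le_combination[OF _ state_square_integrable(3) flux_square_integrable state_square_integrable(2)])
  fix x assume x: "x \<in> {0..L}"
  have "P0\<^sup>2 * (cmod (wd1 L (wd2 L w) x))\<^sup>2 \<le> (cmod (complex_of_real (P x) * wd1 L (wd2 L w) x))\<^sup>2"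
    using P_ge[OF x] P0_pos by (simp add: norm_mult power_mult_distrib mult_right_mono power_mono)
  also have "complex_of_real (P x) * wd1 L (wd2 L w) x = flux_deriv w x + - (P' x * wd2 L w x)"
    by (simp add: flux_deriv_def)
  also have "(cmod \<dots>)\<^sup>2 \<le> 2 * (cmod (flux_deriv w x))\<^sup>2 + 2 * M\<^sup>2 * (cmod (wd2 L w x))\<^sup>2"
    using norm_add_sq_le[of "flux_deriv w x" "- (P' x * wd2 L w x)"]
      norm_mult_sq_le[OF P'_le[OF x], of "wd2 L w x"] by simp
  finally show "(cmod (wd1 L (wd2 L w) x))\<^sup>2
      \<le> 2 / P0\<^sup>2 * (cmod (flux_deriv w x))\<^sup>2 + 2 * M\<^sup>2 / P0\<^sup>2 * (cmod (wd2 L w x))\<^sup>2"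
    using P0_pos by (simp add: field_simps)
qed

lemma components_le_stnorm_sq:
  defines "S \<equiv> (stnorm L (w, v, \<xi>, \<psi>))\<^sup>2"
  shows "sq_L2 L w \<le> S" "sq_L2 L (wd2 L w) \<le> S" "sq_L2 L (wd1 L (wd2 L w)) \<le> S"
    and "sq_L2 L v \<le> S" "sq_L2 L (wd1 L v) \<le> S" "(cmod \<xi>)\<^sup>2 \<le> S" "(cmod \<psi>)\<^sup>2 \<le> S"
  using state_square_integrable unfolding S_def stnorm_sq_eq by (simp_all add: sq_L2_nonneg)

lemma trace_sq_le:
  defines "S \<equiv> (stnorm L (w, v, \<xi>, \<psi>))\<^sup>2"
  shows "(cmod (w 0))\<^sup>2 \<le> (2 / L + 2 * L) * S"
    and "(cmod (wd2 L w 0))\<^sup>2 \<le> (2 / L + 2 * L) * S"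
    and "(cmod (wd2 L w L))\<^sup>2 \<le> (2 / L + 2 * L) * S"
proof -
  note sq = state_square_integrable
  note le_S = components_le_stnorm_sq[folded S_def]
  have bound: "2 / L * X + 2 * L * Y \<le> (2 / L + 2 * L) * S" if "X \<le> S" "Y \<le> S" for X Y
  proof -
    have "2 / L * X \<le> 2 / L * S" "2 * L * Y \<le> 2 * L * S"
      using that L_pos by (simp_all add: divide_right_mono)
    then show ?thesis by (simp add: distrib_right)
  qed
  show "(cmod (w 0))\<^sup>2 \<le> (2 / L + 2 * L) * S"
    by (rule order_trans[OF has_wderiv_trace_le[OF state_wderiv(1) sq(1) L_pos] bound[OF le_S(1,2)]])
      (use L_pos in simp)
  show "(cmod (wd2 L w 0))\<^sup>2 \<le> (2 / L + 2 * L) * S"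
    by (rule order_trans[OF has_wderiv_trace_le[OF state_wderiv(2) sq(2) L_pos] bound[OF le_S(2,3)]])
      (use L_pos in simp)
  show "(cmod (wd2 L w L))\<^sup>2 \<le> (2 / L + 2 * L) * S"
    by (rule order_trans[OF has_wderiv_trace_le[OF state_wderiv(2) sq(2) L_pos] bound[OF le_S(2,3)]])
      (use L_pos in simp)
qed

lemma boundary_sq_le:
  "(cmod (\<psi> - 2 * of_real a1 * of_real (P 0) * wd2 L w 0 + 2 * of_real a2 * w 0))\<^sup>2
     \<le> 4 * (cmod \<psi>)\<^sup>2 + 16 * a1\<^sup>2 * Pm\<^sup>2 * (cmod (wd2 L w 0))\<^sup>2 + 8 * a2\<^sup>2 * (cmod (w 0))\<^sup>2"
proof -
  have "cmod (2 * of_real a1 * of_real (P 0)) \<le> 2 * a1 * Pm"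
    using a1_pos P_endpoints P0_pos by (simp add: norm_mult)
  from norm_mult_sq_le[OF this, of "wd2 L w 0"]
    norm_diff_add_sq_le[of \<psi> "2 * of_real a1 * of_real (P 0) * wd2 L w 0" "2 * of_real a2 * w 0"]
  show ?thesis using a2_pos by (simp add: norm_mult power_mult_distrib)
qed

lemma interior_terms_le:
  defines "S \<equiv> (stnorm L (w, v, \<xi>, \<psi>))\<^sup>2"
  shows "\<gamma> * sq_L2 L (flux_deriv w) + integral {0..L} (\<lambda>x. P x * (cmod (wd2 L w x))\<^sup>2)
      \<le> (\<gamma> * (2 * M\<^sup>2 + 2 * Pm\<^sup>2) + Pm) * S"
    and "\<gamma> * integral {0..L} (\<lambda>x. P x * (cmod (wd1 L v x))\<^sup>2) + sq_L2 L v \<le> (\<gamma> * Pm + 1) * S"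
proof -
  note le_S = components_le_stnorm_sq[folded S_def] and sq = state_square_integrable
  have "sq_L2 L (flux_deriv w) \<le> (2 * M\<^sup>2 + 2 * Pm\<^sup>2) * S"
    using flux_sq_L2_le mult_left_mono[OF le_S(2), of "2 * M\<^sup>2"] mult_left_mono[OF le_S(3), of "2 * Pm\<^sup>2"]
    by (simp add: distrib_right)
  then have "\<gamma> * sq_L2 L (flux_deriv w) \<le> \<gamma> * (2 * M\<^sup>2 + 2 * Pm\<^sup>2) * S"
    using mult_left_mono \<gamma>_pos by (fastforce simp: mult.assoc)
  moreover have "integral {0..L} (\<lambda>x. P x * (cmod (wd2 L w x))\<^sup>2) \<le> Pm * S"
    using P_weighted_bounds(3)[OF sq(2)] mult_left_mono[OF le_S(2), of Pm] Pm_pos by linarith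
  ultimately show "\<gamma> * sq_L2 L (flux_deriv w) + integral {0..L} (\<lambda>x. P x * (cmod (wd2 L w x))\<^sup>2)
      \<le> (\<gamma> * (2 * M\<^sup>2 + 2 * Pm\<^sup>2) + Pm) * S"
    by (simp add: distrib_right)
  have "integral {0..L} (\<lambda>x. P x * (cmod (wd1 L v x))\<^sup>2) \<le> Pm * S"
    using P_weighted_bounds(3)[OF sq(5)] mult_left_mono[OF le_S(5), of Pm] Pm_pos by linarith
  then have "\<gamma> * integral {0..L} (\<lambda>x. P x * (cmod (wd1 L v x))\<^sup>2) \<le> \<gamma> * Pm * S"
    using mult_left_mono \<gamma>_pos by (fastforce simp: mult.assoc)
  then show "\<gamma> * integral {0..L} (\<lambda>x. P x * (cmod (wd1 L v x))\<^sup>2) + sq_L2 L v \<le> (\<gamma> * Pm + 1) * S"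
    using le_S(4) by (simp add: distrib_right)
qed

lemma energy_le: "energy (w, v, \<xi>, \<psi>) \<le> upper_const * (stnorm L (w, v, \<xi>, \<psi>))\<^sup>2"
proof -
  define S where "S = (stnorm L (w, v, \<xi>, \<psi>))\<^sup>2"
  define E where "E = 2 / L + 2 * L"
  note le_S = components_le_stnorm_sq[folded S_def] and trace = trace_sq_le[folded S_def E_def]
  have scale: "a * x \<le> a * k * S" if "x \<le> k * S" "0 \<le> a" for a x k
    using mult_left_mono[OF that] by (simp add: mult.assoc)
  have e1: "a1 * (\<gamma> * sq_L2 L (flux_deriv w) + integral {0..L} (\<lambda>x. P x * (cmod (wd2 L w x))\<^sup>2))
      \<le> a1 * (\<gamma> * (2 * M\<^sup>2 + 2 * Pm\<^sup>2) + Pm) * S"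
    using scale[OF interior_terms_le(1)[folded S_def], of a1] a1_pos by simp
  have "P L * (cmod (wd2 L w L))\<^sup>2 \<le> Pm * (E * S)"
    using mult_mono[OF P_endpoints(4) trace(3)] Pm_pos by simp
  from scale[of _ Pm "a1 * \<gamma>"] this have e2: "a1 * \<gamma> * P L * (cmod (wd2 L w L))\<^sup>2 \<le> a1 * \<gamma> * Pm * E * S"
    using a1_pos \<gamma>_pos by (simp add: mult.assoc)
  have e3: "a2 * (cmod (w 0))\<^sup>2 \<le> a2 * E * S"
    using scale[OF trace(1)] a2_pos by simp
  have e4: "a1 * (\<gamma> * integral {0..L} (\<lambda>x. P x * (cmod (wd1 L v x))\<^sup>2) + sq_L2 L v) \<le> a1 * (\<gamma> * Pm + 1) * S"
    using scale[OF interior_terms_le(2)[folded S_def], of a1] a1_pos by simp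
  have e5: "a1 * P L * (cmod \<xi>)\<^sup>2 \<le> a1 * Pm * S"
    using mult_mono[OF P_endpoints(4) le_S(6)] Pm_pos scale[of _ Pm a1] a1_pos by (simp add: mult.assoc)
  have e6: "a2 * \<gamma> * (cmod \<psi>)\<^sup>2 \<le> a2 * \<gamma> * S"
    using scale[of "(cmod \<psi>)\<^sup>2" 1 "a2 * \<gamma>"] le_S(7) a2_pos \<gamma>_pos by simp
  have e7: "1/2 * (cmod (\<psi> - 2 * of_real a1 * of_real (P 0) * wd2 L w 0 + 2 * of_real a2 * w 0))\<^sup>2
      \<le> (2 + (8 * a1\<^sup>2 * Pm\<^sup>2 + 4 * a2\<^sup>2) * E) * S"
    using boundary_sq_le le_S(7) scale[OF trace(2), of "8 * a1\<^sup>2 * Pm\<^sup>2"] scale[OF trace(1), of "4 * a2\<^sup>2"]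
    by (simp add: algebra_simps)
  have "upper_const * S = a1 * (\<gamma> * (2 * M\<^sup>2 + 2 * Pm\<^sup>2) + Pm) * S + a1 * \<gamma> * Pm * E * S + a2 * E * S
      + a1 * (\<gamma> * Pm + 1) * S + a1 * Pm * S + a2 * \<gamma> * S + (2 + (8 * a1\<^sup>2 * Pm\<^sup>2 + 4 * a2\<^sup>2) * E) * S"
    unfolding upper_const_def E_def by (simp add: algebra_simps)
  with e1 e2 e3 e4 e5 e6 e7 show ?thesis
    unfolding energy_def prod.case S_def by linarith
qed

lemma energy_controls:
  defines "N \<equiv> energy (w, v, \<xi>, \<psi>)"
  shows "a1 * \<gamma> * sq_L2 L (flux_deriv w) \<le> N" "a1 * P0 * sq_L2 L (wd2 L w) \<le> N"
    and "a2 * (cmod (w 0))\<^sup>2 \<le> N" "a1 * sq_L2 L v \<le> N" "a1 * \<gamma> * P0 * sq_L2 L (wd1 L v) \<le> N"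
    and "a1 * P0 * (cmod \<xi>)\<^sup>2 \<le> N" "a2 * \<gamma> * (cmod \<psi>)\<^sup>2 \<le> N"
proof -
  note sq = state_square_integrable
  define IPw where "IPw = integral {0..L} (\<lambda>x. P x * (cmod (wd2 L w x))\<^sup>2)"
  define IPv where "IPv = integral {0..L} (\<lambda>x. P x * (cmod (wd1 L v x))\<^sup>2)"
  have "0 \<le> sq_L2 L (flux_deriv w)" "0 \<le> sq_L2 L (wd2 L w)" "0 \<le> sq_L2 L v" "0 \<le> sq_L2 L (wd1 L v)"
    using flux_square_integrable sq by (simp_all add: sq_L2_nonneg)
  moreover have "P0 * sq_L2 L (wd2 L w) \<le> IPw" "P0 * sq_L2 L (wd1 L v) \<le> IPv"
    unfolding IPw_def IPv_def using P_weighted_bounds(2) sq by blast+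
  moreover from calculation have "0 \<le> IPw" "0 \<le> IPv"
    using P0_pos by (meson less_imp_le mult_nonneg_nonneg order_trans)+
  ultimately have "0 \<le> a1 * \<gamma> * sq_L2 L (flux_deriv w)" "0 \<le> a1 * sq_L2 L v"
    "a1 * P0 * sq_L2 L (wd2 L w) \<le> a1 * IPw" "a1 * \<gamma> * P0 * sq_L2 L (wd1 L v) \<le> a1 * \<gamma> * IPv"
    "0 \<le> a1 * IPw" "0 \<le> a1 * \<gamma> * IPv"
    using a1_pos \<gamma>_pos P0_pos mult_left_mono[of "P0 * _" _ a1] mult_left_mono[of "P0 * _" _ "a1 * \<gamma>"]
    by (auto simp: mult.assoc intro: order_trans[of 0 "P0 * _"])
  moreover have "a1 * (\<gamma> * sq_L2 L (flux_deriv w) + IPw) = a1 * \<gamma> * sq_L2 L (flux_deriv w) + a1 * IPw"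
    "a1 * (\<gamma> * IPv + sq_L2 L v) = a1 * \<gamma> * IPv + a1 * sq_L2 L v"
    by (simp_all add: algebra_simps)
  moreover have "a1 * P0 * (cmod \<xi>)\<^sup>2 \<le> a1 * P L * (cmod \<xi>)\<^sup>2"
    using P_endpoints a1_pos by (simp add: mult_left_mono mult_right_mono)
  moreover have "0 \<le> a1 * \<gamma> * P L * (cmod (wd2 L w L))\<^sup>2" "0 \<le> a2 * (cmod (w 0))\<^sup>2"
    "0 \<le> a1 * P0 * (cmod \<xi>)\<^sup>2" "0 \<le> a2 * \<gamma> * (cmod \<psi>)\<^sup>2"
    "0 \<le> 1/2 * (cmod (\<psi> - 2 * of_real a1 * of_real (P 0) * wd2 L w 0 + 2 * of_real a2 * w 0))\<^sup>2"
    using P_endpoints P0_pos a1_pos a2_pos \<gamma>_pos by simp_all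
  ultimately show "a1 * \<gamma> * sq_L2 L (flux_deriv w) \<le> N" "a1 * P0 * sq_L2 L (wd2 L w) \<le> N"
    and "a2 * (cmod (w 0))\<^sup>2 \<le> N" "a1 * sq_L2 L v \<le> N" "a1 * \<gamma> * P0 * sq_L2 L (wd1 L v) \<le> N"
    and "a1 * P0 * (cmod \<xi>)\<^sup>2 \<le> N" "a2 * \<gamma> * (cmod \<psi>)\<^sup>2 \<le> N"
    unfolding N_def energy_def prod.case IPw_def[symmetric] IPv_def[symmetric] by linarith+
qed

lemma stnorm_sq_le: "(stnorm L (w, v, \<xi>, \<psi>))\<^sup>2 \<le> lower_const * energy (w, v, \<xi>, \<psi>)"
proof -
  define N where "N = energy (w, v, \<xi>, \<psi>)"
  have scaled: "X \<le> 1 / c * N" if "c * X \<le> N" "0 < c" for c X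
    using that by (simp add: pos_le_divide_eq mult.commute)
  note ctrl = energy_controls[folded N_def]
  have w1: "sq_L2 L (wd2 L w) \<le> 1 / (a1 * P0) * N"
    using scaled[OF ctrl(2)] a1_pos P0_pos by simp
  have w0: "sq_L2 L w \<le> 2 * L / a2 * N + 2 * L\<^sup>2 / (a1 * P0) * N"
  proof -
    have "2 * L * (cmod (w 0))\<^sup>2 \<le> 2 * L * (1 / a2 * N)"
      using scaled[OF ctrl(3) a2_pos] L_pos by (intro mult_left_mono) simp_all
    moreover have "2 * L\<^sup>2 * sq_L2 L (wd2 L w) \<le> 2 * L\<^sup>2 * (1 / (a1 * P0) * N)"
      using w1 by (intro mult_left_mono) simp_all
    ultimately show ?thesis
      using sq_L2_le_boundary[OF state_wderiv(1) state_square_integrable(1)] L_pos by simp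
  qed
  have w2: "sq_L2 L (wd1 L (wd2 L w)) \<le> 2 / (P0\<^sup>2 * a1 * \<gamma>) * N + 2 * M\<^sup>2 / (P0\<^sup>2 * a1 * P0) * N"
  proof -
    have "2 / P0\<^sup>2 * sq_L2 L (flux_deriv w) \<le> 2 / P0\<^sup>2 * (1 / (a1 * \<gamma>) * N)"
      using scaled[OF ctrl(1)] a1_pos \<gamma>_pos by (intro mult_left_mono) simp_all
    moreover have "2 * M\<^sup>2 / P0\<^sup>2 * sq_L2 L (wd2 L w) \<le> 2 * M\<^sup>2 / P0\<^sup>2 * (1 / (a1 * P0) * N)"
      using w1 by (intro mult_left_mono) simp_all
    ultimately show ?thesis using second_deriv_sq_L2_le by simp
  qed
  have "sq_L2 L v \<le> 1 / a1 * N" "sq_L2 L (wd1 L v) \<le> 1 / (a1 * \<gamma> * P0) * N"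
    "(cmod \<xi>)\<^sup>2 \<le> 1 / (a1 * P0) * N" "(cmod \<psi>)\<^sup>2 \<le> 1 / (a2 * \<gamma>) * N"
    using scaled[OF ctrl(4)] scaled[OF ctrl(5)] scaled[OF ctrl(6)] scaled[OF ctrl(7)]
      a1_pos a2_pos \<gamma>_pos P0_pos by simp_all
  with w0 w1 w2 show ?thesis
    unfolding stnorm_sq_eq lower_const_def N_def[symmetric] distrib_right by linarith
qed

end

lemma norm_equivalence:
  assumes "z \<in> Hsp L"
  shows "stnorm L z / sqrt lower_const \<le> normH L P a1 a2 \<gamma> z"
    and "normH L P a1 a2 \<gamma> z \<le> sqrt upper_const * stnorm L z"
proof -
  obtain w v \<xi> \<psi> where z: "z = (w, v, \<xi>, \<psi>)" by (cases z) auto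
  note state = assms[unfolded z]
  have "normH L P a1 a2 \<gamma> z = sqrt (energy z)"
    using ipH_eq_energy[OF state] by (simp add: normH_def z)
  moreover have "0 \<le> energy z"
  proof -
    have "0 \<le> a2 * (cmod (w 0))\<^sup>2" using a2_pos by simp
    then show ?thesis using energy_controls(3)[OF state] by (simp add: z)
  qed
  ultimately show "stnorm L z / sqrt lower_const \<le> normH L P a1 a2 \<gamma> z"
    and "normH L P a1 a2 \<gamma> z \<le> sqrt upper_const * stnorm L z"
    using sqrt_bounds_of_square_bounds[OF _ stnorm_nonneg[OF state] lower_const_pos
        energy_le[OF state] stnorm_sq_le[OF state]]
    by (simp_all add: z)
qed

end

theorem lemma2p1:
  fixes L P0 a1 a2 \<gamma> :: real and P :: "real \<Rightarrow> real"
  assumes "L > 0"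
    and "H2 L (\<lambda>x. complex_of_real (P x))"
    and "P0 > 0" and "\<forall>x\<in>{0..L}. P x \<ge> P0"
    and "a1 > 0" and "a2 > 0" and "\<gamma> > 0"
  shows "\<exists>c1>0. \<exists>c2>0. \<forall>z\<in>Hsp L.
           c1 * stnorm L z \<le> normH L P a1 a2 \<gamma> z \<and> normH L P a1 a2 \<gamma> z \<le> c2 * stnorm L z"
proof -
  obtain P' where P': "has_wderiv L (\<lambda>x. complex_of_real (P x)) P'" and "H1 L P'"
    using assms(2) unfolding H2_def by blast
  then obtain P'' where "has_wderiv L P' P''" unfolding H1_def by blast
  obtain M where M: "\<And>x. x \<in> {0..L} \<Longrightarrow> cmod (P' x) \<le> M"
    using continuous_on_Icc_norm_bound[OF has_wderiv_continuous_on[OF \<open>has_wderiv L P' P''\<close>]] by blast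
  obtain Pm where "\<And>x. x \<in> {0..L} \<Longrightarrow> cmod (complex_of_real (P x)) \<le> Pm"
    using continuous_on_Icc_norm_bound[OF has_wderiv_continuous_on[OF P']] by blast
  then have Pm: "\<And>x. x \<in> {0..L} \<Longrightarrow> P x \<le> Pm" by fastforce
  interpret tension_energy L P0 Pm M a1 a2 \<gamma> P P'
    using assms P' M Pm by unfold_locales auto
  have "\<forall>z\<in>Hsp L. 1 / sqrt lower_const * stnorm L z \<le> normH L P a1 a2 \<gamma> z
      \<and> normH L P a1 a2 \<gamma> z \<le> sqrt upper_const * stnorm L z"
    using norm_equivalence by simp
  then show ?thesis
    using lower_const_pos upper_const_pos
    by (intro exI[of _ "1 / sqrt lower_const"] exI[of _ "sqrt upper_const"] conjI) simp_all
qed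

end
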